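(* For every natural number $n\geq 64$, $$\iota(2^n-1)\leq n+1-\sum_{j=1}^{\lfloor \frac{\log n}{\log 2}\rfloor}\xi(n,j)+3\left\lfloor \frac{\log n}{\log 2}\right\rfloor,$$ where $0\leq \xi(n,j)<1$ are the quantities defined in the context.
   Context: An addition chain producing a positive integer $N$ is a sequence $1=s_1,2=s_2,s_3,\ldots,s_k=N$ in which every term after the first is the sum of two (not necessarily distinct) earlier terms; its length is the number of terms excluding the initial $1$ (here $k-1$). $\iota(N)$ denotes the length of the shortest addition chain producing $N$. The quantities $\xi(n,j)$ come from iterated halving of the exponent: set $n_0=n$ and $n_j=\frac{n_{j-1}-\frac{1}{2}(1-(-1)^{n_{j-1}})}{2}$ (i.e. $n_j=\lfloor n/2^j\rfloor$), and write $n_j=\frac{n}{2^j}-\xi(n,j)$; thus e.g. $\xi(n,1)=\frac{1}{4}(1-(-1)^n)$, and $0\leq \xi(n,j)<1$, with $\xi(n,j)=0$ for all $j$ when $n$ is a power of $2$. $\log$ is the natural logarithm and $\lfloor\cdot\rfloor$ the floor function. *)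

theory Defs
  imports "HOL-Analysis.Analysis"
begin

definition is_addition_chain :: "nat list \<Rightarrow> nat \<Rightarrow> bool" where
  "is_addition_chain cs N \<longleftrightarrow>
     cs \<noteq> [] \<and> cs ! 0 = 1 \<and> last cs = N \<and>
     (\<forall>i. 0 < i \<and> i < length cs \<longrightarrow> (\<exists>j k. j < i \<and> k < i \<and> cs ! i = cs ! j + cs ! k))"

definition iota :: "nat \<Rightarrow> nat" where
  "iota N = (LEAST l. \<exists>cs. is_addition_chain cs N \<and> length cs - 1 = l)"

definition xi :: "nat \<Rightarrow> nat \<Rightarrow> real" where
  "xi n j = real n / 2 ^ j - real (n div 2 ^ j)"

end

theory Submission
  imports Defs "HOL-Library.Discrete_Functions"
begin

text \<open>The binary method for Mersenne numbers: from a chain ending in \<open>2^k - 1\<close>, \<open>k\<close> doublings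
and one addition of \<open>2^k - 1\<close> reach \<open>2^k (2^k - 1) + (2^k - 1) = 2^(2k) - 1\<close>, and one more
doubling plus adding \<open>1\<close> reaches \<open>2^(2k+1) - 1\<close>. Recursing on \<open>n div 2\<close> gives
\<open>\<iota>(2^n - 1) \<le> n - 1 + 2 \<lfloor>log\<^sub>2 n\<rfloor>\<close> for every \<open>n > 0\<close>. Since every \<open>\<xi>(n,j) < 1\<close>,
the right-hand side of the theorem is at least \<open>n + 1 + 2 \<lfloor>log\<^sub>2 n\<rfloor>\<close>, so the claim
follows with room to spare; the hypothesis \<open>n \<ge> 64\<close> is only used as \<open>n > 0\<close>.\<close>

lemma is_addition_chain_one_in_set: "is_addition_chain cs N \<Longrightarrow> 1 \<in> set cs"
  unfolding is_addition_chain_def by (metis length_greater_0_conv nth_mem)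

lemma is_addition_chain_last_in_set: "is_addition_chain cs N \<Longrightarrow> N \<in> set cs"
  unfolding is_addition_chain_def by (metis last_in_set)

lemma is_addition_chain_snoc:
  assumes chain: "is_addition_chain cs N" and "x \<in> set cs" "y \<in> set cs"
  shows "is_addition_chain (cs @ [x + y]) (x + y)"
proof -
  obtain a b where ab: "a < length cs" "cs ! a = x" "b < length cs" "cs ! b = y"
    using \<open>x \<in> set cs\<close> \<open>y \<in> set cs\<close> by (metis in_set_conv_nth)
  have "\<exists>j k. j < i \<and> k < i \<and> (cs @ [x + y]) ! i = (cs @ [x + y]) ! j + (cs @ [x + y]) ! k"
    if i: "0 < i" "i < length (cs @ [x + y])" for i
  proof (cases "i < length cs")
    case True
    then obtain j k where "j < i" "k < i" "cs ! i = cs ! j + cs ! k"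
      using chain i(1) unfolding is_addition_chain_def by blast
    with True show ?thesis by (intro exI[of _ j] exI[of _ k]) (simp add: nth_append)
  next
    case False
    with i(2) have "i = length cs" by simp
    with ab show ?thesis by (intro exI[of _ a] exI[of _ b]) (simp add: nth_append)
  qed
  with chain show ?thesis unfolding is_addition_chain_def by (simp add: nth_append)
qed

lemma is_addition_chain_doublings:
  assumes "is_addition_chain cs N"
  shows "\<exists>ds. is_addition_chain (cs @ ds) (2 ^ k * N) \<and> length ds = k"
proof (induction k)
  case 0
  with assms show ?case by (intro exI[of _ "[]"]) simp
next
  case (Suc k)
  then obtain ds where ds: "is_addition_chain (cs @ ds) (2 ^ k * N)" "length ds = k"
    by blast
  let ?M = "2 ^ k * N"
  have "?M \<in> set (cs @ ds)" using ds(1) by (rule is_addition_chain_last_in_set)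
  from ds(1) this this have "is_addition_chain ((cs @ ds) @ [?M + ?M]) (?M + ?M)"
    by (rule is_addition_chain_snoc)
  moreover have "?M + ?M = 2 ^ Suc k * N" by simp
  ultimately have "is_addition_chain (cs @ ds @ [2 ^ Suc k * N]) (2 ^ Suc k * N)" by simp
  with ds(2) show ?case by (intro exI[of _ "ds @ [2 ^ Suc k * N]"]) simp
qed

lemma mersenne_shift_add: "2 ^ a * (2 ^ b - 1) + (2 ^ a - 1) = (2 ^ (a + b) - 1 :: nat)"
proof -
  have "(1::nat) \<le> 2 ^ a" "(2::nat) ^ a \<le> 2 ^ a * 2 ^ b" by simp_all
  then show ?thesis by (simp add: power_add diff_mult_distrib2)
qed

lemma is_addition_chain_mersenne_extend:
  assumes chain: "is_addition_chain cs (2 ^ b - 1)" and mem: "2 ^ a - 1 \<in> set cs"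
  shows "\<exists>ds. is_addition_chain (cs @ ds) (2 ^ (a + b) - 1) \<and> length ds = a + 1"
proof -
  obtain ds where ds: "is_addition_chain (cs @ ds) (2 ^ a * (2 ^ b - 1))" "length ds = a"
    using is_addition_chain_doublings[OF chain] by blast
  have "is_addition_chain ((cs @ ds) @ [2 ^ a * (2 ^ b - 1) + (2 ^ a - 1)])
      (2 ^ a * (2 ^ b - 1) + (2 ^ a - 1))"
    using ds(1) is_addition_chain_last_in_set[OF ds(1)] mem by (intro is_addition_chain_snoc) auto
  with ds(2) show ?thesis
    unfolding mersenne_shift_add by (intro exI[of _ "ds @ [2 ^ (a + b) - 1]"]) simp
qed

lemma mersenne_addition_chain:
  assumes "0 < m"
  shows "\<exists>cs. is_addition_chain cs (2 ^ m - 1) \<and> length cs \<le> m + 2 * floor_log m"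
  using assms
proof (induction m rule: floor_log_induct)
  case one
  have "is_addition_chain [1] 1" unfolding is_addition_chain_def by auto
  then show ?case by (intro exI[of _ "[1]"]) simp
next
  case (double m)
  define k where "k = m div 2"
  have log_m: "floor_log m = Suc (floor_log k)"
    unfolding k_def using \<open>2 \<le> m\<close> by (rule floor_log_rec)
  obtain cs where cs: "is_addition_chain cs (2 ^ k - 1)" "length cs \<le> k + 2 * floor_log k"
    using double.IH unfolding k_def by blast
  obtain ds where ds: "is_addition_chain (cs @ ds) (2 ^ (2 * k) - 1)" "length ds = k + 1"
    using is_addition_chain_mersenne_extend[OF cs(1) is_addition_chain_last_in_set[OF cs(1)]]
    by (auto simp: mult_2)
  consider "m = 2 * k" | "m = 2 * k + 1" unfolding k_def by linarith
  then show ?case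
  proof cases
    case 1
    with cs(2) ds log_m show ?thesis by (intro exI[of _ "cs @ ds"]) simp
  next
    case 2
    have "2 ^ 1 - 1 \<in> set (cs @ ds)" using is_addition_chain_one_in_set[OF ds(1)] by simp
    from is_addition_chain_mersenne_extend[OF ds(1) this] obtain es
      where "is_addition_chain (cs @ ds @ es) (2 ^ (2 * k + 1) - 1)" "length es = 2"
      by auto
    with 2 cs(2) ds(2) log_m show ?thesis by (intro exI[of _ "cs @ ds @ es"]) simp
  qed
qed

lemma iota_le_length:
  assumes "is_addition_chain cs N"
  shows "iota N \<le> length cs - 1"
  unfolding iota_def using assms by (intro Least_le) blast

lemma iota_mersenne_le:
  assumes "0 < m"
  shows "iota (2 ^ m - 1) \<le> m - 1 + 2 * floor_log m"
proof -
  obtain cs where "is_addition_chain cs (2 ^ m - 1)" "length cs \<le> m + 2 * floor_log m"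
    using mersenne_addition_chain[OF assms] by blast
  then show ?thesis using iota_le_length by fastforce
qed

lemma floor_log_eq_floor_ln_div_ln2:
  assumes "0 < n"
  shows "\<lfloor>ln (real n) / ln 2\<rfloor> = int (floor_log n)"
proof -
  have "floor_log n = nat \<lfloor>log 2 (real n)\<rfloor>"
    using floor_log_altdef[of n] assms by (simp only: if_not_P[OF gr_implies_not0])
  moreover have "0 \<le> \<lfloor>log 2 (real n)\<rfloor>" using assms by simp
  ultimately show ?thesis by (simp only: log_def int_nat_eq if_True)
qed

lemma xi_less_one: "xi n j < 1"
proof -
  have "real (n div 2 ^ j) = of_int \<lfloor>real n / 2 ^ j\<rfloor>"
    by (metis floor_divide_of_nat_eq of_int_of_nat_eq of_nat_numeral of_nat_power)
  then show ?thesis unfolding xi_def by linarith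
qed

lemma sum_xi_le: "(\<Sum>j = 1..t. xi n j) \<le> real t"
proof -
  have "(\<Sum>j = 1..t. xi n j) \<le> (\<Sum>j = 1..t. 1)"
    by (intro sum_mono less_imp_le xi_less_one)
  then show ?thesis by simp
qed

theorem mainTheorem1:
  fixes n :: nat
  assumes "n \<ge> 64"
  shows "real (iota (2 ^ n - 1))
    \<le> real n + 1 - (\<Sum>j = 1..nat \<lfloor>ln (real n) / ln 2\<rfloor>. xi n j)
       + 3 * real_of_int \<lfloor>ln (real n) / ln 2\<rfloor>"
proof -
  have "0 < n" using assms by simp
  define t where "t = floor_log n"
  have log_n: "\<lfloor>ln (real n) / ln 2\<rfloor> = int t"
    unfolding t_def using \<open>0 < n\<close> by (rule floor_log_eq_floor_ln_div_ln2)
  have "real (iota (2 ^ n - 1)) \<le> real n - 1 + 2 * real t"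
    using iota_mersenne_le[OF \<open>0 < n\<close>] \<open>0 < n\<close> unfolding t_def by linarith
  with sum_xi_le[where n = n and t = t] show ?thesis unfolding log_n by simp
qed

end
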